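(* Let $u=u'u''$ be the product of two 5-complex numbers, and denote the parameters of $u'$, $u''$ by primes and double primes respectively. Then $v_+=v_+'v_+''$; $\rho_k=\rho_k'\rho_k''$ and $\phi_k=\phi_k'+\phi_k''$ (modulo $2\pi$) for $k=1,2$; $v_k=v_k'v_k''-\tilde v_k'\tilde v_k''$ and $\tilde v_k=v_k'\tilde v_k''+\tilde v_k'v_k''$ for $k=1,2$; $\tan\theta_+=\frac{1}{\sqrt2}\tan\theta_+'\tan\theta_+''$; $\tan\psi_1=\tan\psi_1'\tan\psi_1''$; and $\rho=\rho'\rho''$.
   Context: A 5-complex number is $u=x_0+h_1x_1+h_2x_2+h_3x_3+h_4x_4$ with real $x_j$, with componentwise addition and the commutative associative bilinear multiplication determined by $h_jh_k=h_{(j+k)\bmod 5}$, $h_0=1$. Its canonical variables are $v_+=\sum_{j=0}^4 x_j$, and for $k=1,2$: $v_k=\sum_{j=0}^4 x_j\cos(2\pi kj/5)$, $\tilde v_k=\sum_{j=0}^4x_j\sin(2\pi kj/5)$. For $k=1,2$ define $\rho_k\ge 0$ and $\phi_k\in[0,2\pi)$ by $\rho_k^2=v_k^2+\tilde v_k^2$, $\cos\phi_k=v_k/\rho_k$, $\sin\phi_k=\tilde v_k/\rho_k$. The planar angle $\psi_1\in[0,\pi/2]$ is given by $\tan\psi_1=\rho_1/\rho_2$, the polar angle $\theta_+\in[0,\pi]$ by $\tan\theta_+=\sqrt2\rho_1/v_+$, and the amplitude by $\rho=(v_+\rho_1^2\rho_2^2)^{1/5}$ (real fifth root). *)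

theory Defs
  imports "HOL-Analysis.Analysis"
begin

text \<open>A 5-complex number x0 + h1 x1 + ... + h4 x4 is represented by its component
  function x :: nat => real; only the components x 0, ..., x 4 are relevant.\<close>

definition mult5 :: "(nat \<Rightarrow> real) \<Rightarrow> (nat \<Rightarrow> real) \<Rightarrow> (nat \<Rightarrow> real)" where
  "mult5 x y = (\<lambda>m. \<Sum>j<5. \<Sum>k<5. if (j + k) mod 5 = m then x j * y k else 0)"

definition vplus :: "(nat \<Rightarrow> real) \<Rightarrow> real" where
  "vplus x = (\<Sum>j<5. x j)"

definition vk :: "nat \<Rightarrow> (nat \<Rightarrow> real) \<Rightarrow> real" where
  "vk k x = (\<Sum>j<5. x j * cos (2 * pi * real k * real j / 5))"

definition vtk :: "nat \<Rightarrow> (nat \<Rightarrow> real) \<Rightarrow> real" where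
  "vtk k x = (\<Sum>j<5. x j * sin (2 * pi * real k * real j / 5))"

definition rhok :: "nat \<Rightarrow> (nat \<Rightarrow> real) \<Rightarrow> real" where
  "rhok k x = sqrt ((vk k x)\<^sup>2 + (vtk k x)\<^sup>2)"

text \<open>Azimuthal angle phi_k in [0, 2pi), meaningful when rho_k > 0.\<close>
definition phik :: "nat \<Rightarrow> (nat \<Rightarrow> real) \<Rightarrow> real" where
  "phik k x = (SOME \<phi>. 0 \<le> \<phi> \<and> \<phi> < 2 * pi \<and>
      cos \<phi> = vk k x / rhok k x \<and> sin \<phi> = vtk k x / rhok k x)"

definition psi1 :: "(nat \<Rightarrow> real) \<Rightarrow> real" where
  "psi1 x = (if rhok 2 x > 0 then arctan (rhok 1 x / rhok 2 x) else pi / 2)"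

definition thetaplus :: "(nat \<Rightarrow> real) \<Rightarrow> real" where
  "thetaplus x = (if vplus x > 0 then arctan (sqrt 2 * rhok 1 x / vplus x)
                  else if vplus x < 0 then pi + arctan (sqrt 2 * rhok 1 x / vplus x)
                  else pi / 2)"

definition amp :: "(nat \<Rightarrow> real) \<Rightarrow> real" where
  "amp x = root 5 (vplus x * (rhok 1 x)\<^sup>2 * (rhok 2 x)\<^sup>2)"

end

theory Submission
  imports Defs
begin

text \<open>For \<open>k = 0, 1, 2\<close> the complex number \<open>v\<^sub>k + i \<tilde>v\<^sub>k\<close> is the \<open>k\<close>-th discrete Fourier
  coefficient of the component vector on \<open>\<int>/5\<close>, and the 5-complex product is the cyclic
  convolution of component vectors. Fourier coefficients turn convolution into multiplication,
  so they multiply as complex numbers: their real and imaginary parts obey the stated rules,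
  their moduli \<open>\<rho>\<^sub>k\<close> multiply and their arguments \<open>\<phi>\<^sub>k\<close> add modulo \<open>2\<pi>\<close>; \<open>v\<^sub>+\<close> is the
  real coefficient for \<open>k = 0\<close>. The statements about \<open>\<theta>\<^sub>+\<close>, \<open>\<psi>\<^sub>1\<close> and \<open>\<rho>\<close> then follow because
  their tangents, resp. fifth power, are quotients and products of \<open>v\<^sub>+\<close>, \<open>\<rho>\<^sub>1\<close>, \<open>\<rho>\<^sub>2\<close>.\<close>

definition dft :: "nat \<Rightarrow> nat \<Rightarrow> (nat \<Rightarrow> real) \<Rightarrow> complex" where
  "dft n k x = (\<Sum>j<n. of_real (x j) * cis (2 * pi * real k * real j / real n))"

definition cyclic_conv :: "nat \<Rightarrow> (nat \<Rightarrow> real) \<Rightarrow> (nat \<Rightarrow> real) \<Rightarrow> nat \<Rightarrow> real" where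
  "cyclic_conv n x y = (\<lambda>m. \<Sum>j<n. \<Sum>l<n. if (j + l) mod n = m then x j * y l else 0)"

lemma mult5_eq_cyclic_conv: "mult5 = cyclic_conv 5"
  by (simp add: fun_eq_iff mult5_def cyclic_conv_def)

lemma cis_root_of_unity_mod:
  assumes "n > 0"
  shows "cis (2 * pi * real k * real (m mod n) / real n) = cis (2 * pi * real k * real m / real n)"
proof -
  define q r where "q = m div n" and "r = m mod n"
  have "real m = real n * real q + real r"
    unfolding q_def r_def by (simp flip: of_nat_mult of_nat_add)
  then have "2 * pi * real k * real m / real n
      = 2 * pi * real k * real r / real n + 2 * pi * real (k * q)"
    using assms by (simp add: add_divide_distrib distrib_left)
  then show ?thesis
    unfolding r_def by (simp add: cis_mult[symmetric])
qed

lemma dft_cyclic_conv: "dft n k (cyclic_conv n x y) = dft n k x * dft n k y"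
proof (cases "n = 0")
  case True
  then show ?thesis by (simp add: dft_def)
next
  case False
  define w where "w m = cis (2 * pi * real k * real m / real n)" for m
  have w_add: "w ((j + l) mod n) = w j * w l" for j l
    using False by (simp add: w_def cis_root_of_unity_mod cis_mult add_divide_distrib distrib_left)
  have "dft n k (cyclic_conv n x y)
      = (\<Sum>m<n. of_real (\<Sum>j<n. \<Sum>l<n. if (j + l) mod n = m then x j * y l else 0) * w m)"
    by (simp add: dft_def cyclic_conv_def w_def)
  also have "\<dots> = (\<Sum>m<n. \<Sum>j<n. \<Sum>l<n. if (j + l) mod n = m then of_real (x j * y l) * w m else 0)"
    unfolding of_real_sum sum_distrib_right by (intro sum.cong refl) simp
  also have "\<dots> = (\<Sum>j<n. \<Sum>l<n. \<Sum>m<n. if (j + l) mod n = m then of_real (x j * y l) * w m else 0)"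
    by (subst sum.swap, rule sum.cong[OF refl], rule sum.swap)
  also have "\<dots> = (\<Sum>j<n. \<Sum>l<n. of_real (x j * y l) * w ((j + l) mod n))"
    using False by (simp add: sum.delta')
  also have "\<dots> = (\<Sum>j<n. of_real (x j) * w j) * (\<Sum>l<n. of_real (y l) * w l)"
    by (simp add: w_add sum_product mult_ac)
  finally show ?thesis
    by (simp add: dft_def w_def)
qed

lemma dft_mult5: "dft 5 k (mult5 x y) = dft 5 k x * dft 5 k y"
  unfolding mult5_eq_cyclic_conv by (rule dft_cyclic_conv)

lemma Re_dft5: "Re (dft 5 k x) = vk k x"
  and Im_dft5: "Im (dft 5 k x) = vtk k x"
  by (simp_all add: dft_def vk_def vtk_def)

lemma norm_dft5: "norm (dft 5 k x) = rhok k x"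
  by (simp add: rhok_def cmod_def Re_dft5 Im_dft5)

lemma vk_mult5: "vk k (mult5 x y) = vk k x * vk k y - vtk k x * vtk k y"
  by (metis Re_dft5 Im_dft5 dft_mult5 times_complex.sel(1))

lemma vtk_mult5: "vtk k (mult5 x y) = vk k x * vtk k y + vtk k x * vk k y"
  by (metis Re_dft5 Im_dft5 dft_mult5 times_complex.sel(2))

lemma rhok_mult5: "rhok k (mult5 x y) = rhok k x * rhok k y"
  by (metis norm_dft5 dft_mult5 norm_mult)

lemma vplus_mult5: "vplus (mult5 x y) = vplus x * vplus y"
proof -
  have "vplus z = vk 0 z" and "vtk 0 z = 0" for z
    by (simp_all add: vplus_def vk_def vtk_def)
  then show ?thesis
    by (simp add: vk_mult5)
qed

lemma rhok_nonneg: "rhok k x \<ge> 0"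
  by (simp add: rhok_def)

lemma cos_sin_phik:
  assumes "rhok k x > 0"
  shows "cos (phik k x) = vk k x / rhok k x \<and> sin (phik k x) = vtk k x / rhok k x"
proof -
  have rhok_sq: "(rhok k x)\<^sup>2 = (vk k x)\<^sup>2 + (vtk k x)\<^sup>2"
    by (simp add: rhok_def)
  have "(vk k x / rhok k x)\<^sup>2 + (vtk k x / rhok k x)\<^sup>2 = ((vk k x)\<^sup>2 + (vtk k x)\<^sup>2) / (rhok k x)\<^sup>2"
    by (simp add: power_divide add_divide_distrib)
  also have "\<dots> = 1"
    using assms by (simp flip: rhok_sq)
  finally obtain t where "0 \<le> t" "t < 2 * pi" "vk k x / rhok k x = cos t" "vtk k x / rhok k x = sin t"
    by (rule sincos_total_2pi)
  then have "\<exists>t. 0 \<le> t \<and> t < 2 * pi \<and> cos t = vk k x / rhok k x \<and> sin t = vtk k x / rhok k x"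
    by auto
  then show ?thesis
    unfolding phik_def by (rule someI2_ex) auto
qed

lemma dft5_eq_rcis: "dft 5 k x = rcis (rhok k x) (phik k x)"
proof (cases "rhok k x = 0")
  case True
  then show ?thesis
    by (metis norm_dft5 norm_eq_zero rcis_zero_mod)
next
  case False
  then have "rhok k x > 0"
    using rhok_nonneg[of k x] by linarith
  then show ?thesis
    using cos_sin_phik[of k x] by (simp add: complex_eq_iff Re_dft5 Im_dft5)
qed

lemma phik_mult5:
  assumes "rhok k x > 0" and "rhok k y > 0"
  shows "\<exists>m::int. phik k (mult5 x y) = phik k x + phik k y + 2 * pi * of_int m"
proof -
  have "rcis (rhok k x * rhok k y) (phik k (mult5 x y))
      = rcis (rhok k x * rhok k y) (phik k x + phik k y)"
    by (metis dft5_eq_rcis dft_mult5 rhok_mult5 rcis_mult)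
  then have "cis (phik k (mult5 x y)) = cis (phik k x + phik k y)"
    using assms by (simp add: rcis_def)
  then have "sin (phik k (mult5 x y)) = sin (phik k x + phik k y)
      \<and> cos (phik k (mult5 x y)) = cos (phik k x + phik k y)"
    by (metis cis.sel)
  then show ?thesis
    by (simp add: sin_cos_eq_iff)
qed

text \<open>The next two identities also hold when a denominator vanishes: then the angle is
  \<open>pi / 2\<close> and both sides are \<open>0\<close>, since \<open>tan (pi / 2) = 0\<close> and \<open>a / 0 = 0\<close>.\<close>

lemma tan_thetaplus: "tan (thetaplus x) = sqrt 2 * rhok 1 x / vplus x"
  unfolding thetaplus_def by (simp add: tan_arctan add.commute[of pi])

lemma tan_psi1: "tan (psi1 x) = rhok 1 x / rhok 2 x"
proof (cases "rhok 2 x > 0")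
  case True
  then show ?thesis
    by (simp add: psi1_def tan_arctan)
next
  case False
  then have "rhok 2 x = 0"
    using rhok_nonneg[of 2 x] by linarith
  then show ?thesis
    by (simp add: psi1_def tan_def)
qed

lemma amp_mult5: "amp (mult5 x y) = amp x * amp y"
  by (simp add: amp_def vplus_mult5 rhok_mult5 real_root_mult[symmetric] power_mult_distrib mult_ac)

theorem mainTheorem2:
  fixes x' x'' :: "nat \<Rightarrow> real"
  defines "u \<equiv> mult5 x' x''"
  shows "vplus u = vplus x' * vplus x'' \<and>
    (\<forall>k\<in>{1,2}. rhok k u = rhok k x' * rhok k x'') \<and>
    (\<forall>k\<in>{1,2}. rhok k x' > 0 \<longrightarrow> rhok k x'' > 0 \<longrightarrow>
           (\<exists>m::int. phik k u = phik k x' + phik k x'' + 2 * pi * of_int m)) \<and>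
    (\<forall>k\<in>{1,2}. vk k u = vk k x' * vk k x'' - vtk k x' * vtk k x'') \<and>
    (\<forall>k\<in>{1,2}. vtk k u = vk k x' * vtk k x'' + vtk k x' * vk k x'') \<and>
    (tan (thetaplus u) = (1 / sqrt 2) * tan (thetaplus x') * tan (thetaplus x'')) \<and>
    (tan (psi1 u) = tan (psi1 x') * tan (psi1 x'')) \<and>
    (amp u = amp x' * amp x'')"
proof -
  have "tan (thetaplus u) = (1 / sqrt 2) * tan (thetaplus x') * tan (thetaplus x'')"
    by (simp add: u_def tan_thetaplus vplus_mult5 rhok_mult5)
  moreover have "tan (psi1 u) = tan (psi1 x') * tan (psi1 x'')"
    by (simp add: u_def tan_psi1 rhok_mult5)
  ultimately show ?thesis
    by (simp add: u_def vplus_mult5 rhok_mult5 phik_mult5 vk_mult5 vtk_mult5 amp_mult5)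
qed

end
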